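(* Let $M$ be a multigraph with $n$ vertices. Then $M$ is the double competition multigraph of a loopless digraph if and only if there exist an ordering $(v_1,\ldots,v_n)$ of the vertices of $M$ and a double indexed edge clique partition $\{S_{ij}\mid i,j\in[n]\}$ of $M$ such that the following conditions hold: (I) for any $i,j\in[n]$, if $|A_i\cap B_j|\ge 2$, then $A_i\cap B_j=S_{ij}$; (II) for any $i,j\in[n]$, $v_i\notin S_{ij}$ and $v_j\notin S_{ij}$, where $A_i = S_{i*}\cup T^+_i$, $S_{i*} := \bigcup_{p\in[n]} S_{ip}$, $T^+_i := \{v_b \mid a,b\in[n],\ v_i\in S_{ab}\}$, and $B_j = S_{*j}\cup T^-_j$, $S_{*j} := \bigcup_{q\in[n]} S_{qj}$, $T^-_j := \{v_a \mid a,b\in[n],\ v_j\in S_{ab}\}$.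
   Context: A digraph $D$ is a pair $(V(D),A(D))$ with $A(D)$ a set of ordered pairs of vertices (arcs); an arc $(v,v)$ is a loop, and $D$ is loopless if it has no loops. $N^+_D(x)=\{v\mid (x,v)\in A(D)\}$ and $N^-_D(x)=\{v\mid (v,x)\in A(D)\}$. A multigraph $M$ (without loops) is a vertex set $V(M)$ together with a function $m_M$ assigning to each unordered pair $\{x,y\}$ of distinct vertices a nonnegative integer, the number of edges between $x$ and $y$. The double competition multigraph of a digraph $D$ is the multigraph $M$ with $V(M)=V(D)$ and $m_M(\{x,y\}) = |N^+_D(x)\cap N^+_D(y)|\cdot|N^-_D(x)\cap N^-_D(y)|$ for distinct $x,y$. A clique of $M$ is a set of vertices that are pairwise adjacent (i.e. $m_M\ge 1$ on every pair of distinct elements); the empty set and singletons count as cliques. An edge clique partition of $M$ is a family (multiset) $\mathcal{F}$ of cliques of $M$ such that any two distinct vertices $x,y$ are contained in exactly $m_M(\{x,y\})$ members of $\mathcal{F}$; a double indexed edge clique partition $\{S_{ij}\mid i,j\in[n]\}$ is such a family indexed by pairs $(i,j)\in[n]\times[n]$ (members may be empty). $[n]=\{1,\ldots,n\}$. *)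

theory Defs
  imports Main
begin

text \<open>A multigraph on vertex set V is given by a multiplicity function m on unordered
  pairs, represented as 2-element sets {x,y}. A digraph on V is an arc set Arc \<subseteq> V \<times> V.\<close>

definition out_nbr :: "('a \<times> 'a) set \<Rightarrow> 'a \<Rightarrow> 'a set" where
  "out_nbr Arc x = {v. (x, v) \<in> Arc}"

definition in_nbr :: "('a \<times> 'a) set \<Rightarrow> 'a \<Rightarrow> 'a set" where
  "in_nbr Arc x = {v. (v, x) \<in> Arc}"

definition loopless :: "('a \<times> 'a) set \<Rightarrow> bool" where
  "loopless Arc \<longleftrightarrow> (\<forall>v. (v, v) \<notin> Arc)"

definition is_double_competition_multigraph ::
    "'a set \<Rightarrow> ('a \<times> 'a) set \<Rightarrow> ('a set \<Rightarrow> nat) \<Rightarrow> bool" where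
  "is_double_competition_multigraph V Arc m \<longleftrightarrow>
     (\<forall>x\<in>V. \<forall>y\<in>V. x \<noteq> y \<longrightarrow>
        m {x, y} = card (out_nbr Arc x \<inter> out_nbr Arc y) * card (in_nbr Arc x \<inter> in_nbr Arc y))"

definition is_clique :: "'a set \<Rightarrow> ('a set \<Rightarrow> nat) \<Rightarrow> 'a set \<Rightarrow> bool" where
  "is_clique V m K \<longleftrightarrow> K \<subseteq> V \<and> (\<forall>x\<in>K. \<forall>y\<in>K. x \<noteq> y \<longrightarrow> m {x, y} \<ge> 1)"

definition is_double_indexed_ecp ::
    "'a set \<Rightarrow> ('a set \<Rightarrow> nat) \<Rightarrow> nat \<Rightarrow> (nat \<Rightarrow> nat \<Rightarrow> 'a set) \<Rightarrow> bool" where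
  "is_double_indexed_ecp V m n S \<longleftrightarrow>
     (\<forall>i\<in>{1..n}. \<forall>j\<in>{1..n}. is_clique V m (S i j)) \<and>
     (\<forall>x\<in>V. \<forall>y\<in>V. x \<noteq> y \<longrightarrow>
        card {(i, j). i \<in> {1..n} \<and> j \<in> {1..n} \<and> x \<in> S i j \<and> y \<in> S i j} = m {x, y})"

definition S_row :: "nat \<Rightarrow> (nat \<Rightarrow> nat \<Rightarrow> 'a set) \<Rightarrow> nat \<Rightarrow> 'a set" where
  "S_row n S i = (\<Union>p\<in>{1..n}. S i p)"

definition S_col :: "nat \<Rightarrow> (nat \<Rightarrow> nat \<Rightarrow> 'a set) \<Rightarrow> nat \<Rightarrow> 'a set" where
  "S_col n S j = (\<Union>q\<in>{1..n}. S q j)"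

definition T_plus :: "nat \<Rightarrow> (nat \<Rightarrow> 'a) \<Rightarrow> (nat \<Rightarrow> nat \<Rightarrow> 'a set) \<Rightarrow> nat \<Rightarrow> 'a set" where
  "T_plus n v S i = {v b | a b. a \<in> {1..n} \<and> b \<in> {1..n} \<and> v i \<in> S a b}"

definition T_minus :: "nat \<Rightarrow> (nat \<Rightarrow> 'a) \<Rightarrow> (nat \<Rightarrow> nat \<Rightarrow> 'a set) \<Rightarrow> nat \<Rightarrow> 'a set" where
  "T_minus n v S j = {v a | a b. a \<in> {1..n} \<and> b \<in> {1..n} \<and> v j \<in> S a b}"

definition A_set :: "nat \<Rightarrow> (nat \<Rightarrow> 'a) \<Rightarrow> (nat \<Rightarrow> nat \<Rightarrow> 'a set) \<Rightarrow> nat \<Rightarrow> 'a set" where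
  "A_set n v S i = S_row n S i \<union> T_plus n v S i"

definition B_set :: "nat \<Rightarrow> (nat \<Rightarrow> 'a) \<Rightarrow> (nat \<Rightarrow> nat \<Rightarrow> 'a set) \<Rightarrow> nat \<Rightarrow> 'a set" where
  "B_set n v S j = S_col n S j \<union> T_minus n v S j"

end

theory Submission
  imports Defs
begin

text \<open>
  Forward direction: for a loopless digraph let S i j be the set of vertices z with arcs
  z \<rightarrow> v i and v j \<rightarrow> z. Two vertices x, y both lie in S i j exactly when v i is a common
  out-neighbour and v j a common in-neighbour of x and y, so the index pairs (i, j) counting
  the edge xy form a product whose size is the double competition multiplicity. Moreover
  A i lies in the in-neighbourhood of v i and B j in the out-neighbourhood of v j, whence
  A i \<inter> B j = S i j.

  Backward direction: draw an arc x \<rightarrow> v i for every x \<in> A i. Since v k \<in> A i iff v i \<in> B k,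
  the in- and out-neighbourhoods of v i are exactly A i and B i; condition (I) turns
  "x, y \<in> A i \<inter> B j" into "x, y \<in> S i j", and condition (II) makes the digraph loopless.
\<close>

lemma out_nbr_Int_eq_image:
  assumes "Arc \<subseteq> V \<times> V" and "v ` I = V"
  shows "out_nbr Arc x \<inter> out_nbr Arc y = v ` {i\<in>I. (x, v i) \<in> Arc \<and> (y, v i) \<in> Arc}"
  using assms unfolding out_nbr_def by blast

lemma in_nbr_Int_eq_image:
  assumes "Arc \<subseteq> V \<times> V" and "v ` I = V"
  shows "in_nbr Arc x \<inter> in_nbr Arc y = v ` {j\<in>I. (v j, x) \<in> Arc \<and> (v j, y) \<in> Arc}"
  using assms unfolding in_nbr_def by blast

lemma card_pairs_eq_double_competition:
  assumes bij: "bij_betw v I V" and "Arc \<subseteq> V \<times> V"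
    and mem_S: "\<And>i j. i \<in> I \<Longrightarrow> j \<in> I \<Longrightarrow>
      x \<in> S i j \<and> y \<in> S i j \<longleftrightarrow> (x, v i) \<in> Arc \<and> (y, v i) \<in> Arc \<and> (v j, x) \<in> Arc \<and> (v j, y) \<in> Arc"
  shows "card {(i, j). i \<in> I \<and> j \<in> I \<and> x \<in> S i j \<and> y \<in> S i j}
    = card (out_nbr Arc x \<inter> out_nbr Arc y) * card (in_nbr Arc x \<inter> in_nbr Arc y)"
proof -
  let ?Out = "{i\<in>I. (x, v i) \<in> Arc \<and> (y, v i) \<in> Arc}"
  let ?In = "{j\<in>I. (v j, x) \<in> Arc \<and> (v j, y) \<in> Arc}"
  have inj: "inj_on v ?Out" "inj_on v ?In"
    using bij_betw_imp_inj_on[OF bij] by (auto intro: inj_on_subset)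
  have img: "v ` I = V" using bij by (simp add: bij_betw_def)
  have "{(i, j). i \<in> I \<and> j \<in> I \<and> x \<in> S i j \<and> y \<in> S i j} = ?Out \<times> ?In"
    using mem_S by auto
  then show ?thesis
    unfolding out_nbr_Int_eq_image[OF assms(2) img] in_nbr_Int_eq_image[OF assms(2) img]
      card_image[OF inj(1)] card_image[OF inj(2)] by (simp add: card_cartesian_product)
qed

lemma is_double_indexed_ecpI:
  assumes S_V: "\<And>i j. i \<in> {1..n} \<Longrightarrow> j \<in> {1..n} \<Longrightarrow> S i j \<subseteq> V"
    and count: "\<And>x y. x \<in> V \<Longrightarrow> y \<in> V \<Longrightarrow> x \<noteq> y \<Longrightarrow>
      card {(i, j). i \<in> {1..n} \<and> j \<in> {1..n} \<and> x \<in> S i j \<and> y \<in> S i j} = m {x, y}"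
  shows "is_double_indexed_ecp V m n S"
  unfolding is_double_indexed_ecp_def
proof (intro conjI ballI impI)
  fix i j assume ij: "i \<in> {1..n}" "j \<in> {1..n}"
  show "is_clique V m (S i j)"
    unfolding is_clique_def
  proof (intro conjI ballI impI)
    fix x y assume xy: "x \<in> S i j" "y \<in> S i j" "x \<noteq> y"
    let ?P = "{(i, j). i \<in> {1..n} \<and> j \<in> {1..n} \<and> x \<in> S i j \<and> y \<in> S i j}"
    have "finite ?P"
      by (rule finite_subset[of _ "{1..n} \<times> {1..n}"]) auto
    moreover have "(i, j) \<in> ?P" using ij xy by simp
    ultimately have "card ?P \<noteq> 0" by auto
    then show "1 \<le> m {x, y}" using count S_V[OF ij] xy by fastforce
  qed (use S_V[OF ij] in blast)
qed (use count in simp)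

lemma double_indexed_ecp_subset:
  assumes "is_double_indexed_ecp V m n S" and "i \<in> {1..n}" and "j \<in> {1..n}"
  shows "S i j \<subseteq> V"
  using assms unfolding is_double_indexed_ecp_def is_clique_def by blast

lemma S_subset_A_set_Int_B_set:
  assumes "i \<in> {1..n}" and "j \<in> {1..n}"
  shows "S i j \<subseteq> A_set n v S i \<inter> B_set n v S j"
  using assms unfolding A_set_def B_set_def S_row_def S_col_def by blast

definition common_nbr_family :: "('a \<times> 'a) set \<Rightarrow> (nat \<Rightarrow> 'a) \<Rightarrow> nat \<Rightarrow> nat \<Rightarrow> 'a set" where
  "common_nbr_family Arc v i j = in_nbr Arc (v i) \<inter> out_nbr Arc (v j)"

lemma A_set_common_nbr_family_subset:
  "A_set n v (common_nbr_family Arc v) i \<subseteq> in_nbr Arc (v i)"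
  unfolding A_set_def S_row_def T_plus_def common_nbr_family_def in_nbr_def out_nbr_def
  by blast

lemma B_set_common_nbr_family_subset:
  "B_set n v (common_nbr_family Arc v) j \<subseteq> out_nbr Arc (v j)"
  unfolding B_set_def S_col_def T_minus_def common_nbr_family_def in_nbr_def out_nbr_def
  by blast

lemma A_set_Int_B_set_common_nbr_family:
  assumes "i \<in> {1..n}" and "j \<in> {1..n}"
  shows "A_set n v (common_nbr_family Arc v) i \<inter> B_set n v (common_nbr_family Arc v) j
    = common_nbr_family Arc v i j"
proof (rule antisym)
  show "A_set n v (common_nbr_family Arc v) i \<inter> B_set n v (common_nbr_family Arc v) j
    \<subseteq> common_nbr_family Arc v i j"
    unfolding common_nbr_family_def[of Arc v i j]
    by (rule Int_mono[OF A_set_common_nbr_family_subset B_set_common_nbr_family_subset])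
qed (rule S_subset_A_set_Int_B_set[OF assms])

lemma double_indexed_ecp_common_nbr_family:
  assumes bij: "bij_betw v {1..n} V" and Arc_V: "Arc \<subseteq> V \<times> V"
    and dc: "is_double_competition_multigraph V Arc m"
  shows "is_double_indexed_ecp V m n (common_nbr_family Arc v)"
proof (rule is_double_indexed_ecpI)
  show "common_nbr_family Arc v i j \<subseteq> V" for i j
    using Arc_V unfolding common_nbr_family_def in_nbr_def by blast
  fix x y assume "x \<in> V" "y \<in> V" "x \<noteq> y"
  have "card {(i, j). i \<in> {1..n} \<and> j \<in> {1..n} \<and>
      x \<in> common_nbr_family Arc v i j \<and> y \<in> common_nbr_family Arc v i j}
    = card (out_nbr Arc x \<inter> out_nbr Arc y) * card (in_nbr Arc x \<inter> in_nbr Arc y)"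
    by (rule card_pairs_eq_double_competition[OF bij Arc_V])
      (auto simp: common_nbr_family_def in_nbr_def out_nbr_def)
  also have "\<dots> = m {x, y}"
    using dc \<open>x \<in> V\<close> \<open>y \<in> V\<close> \<open>x \<noteq> y\<close>
    unfolding is_double_competition_multigraph_def by simp
  finally show "card {(i, j). i \<in> {1..n} \<and> j \<in> {1..n} \<and>
      x \<in> common_nbr_family Arc v i j \<and> y \<in> common_nbr_family Arc v i j} = m {x, y}" .
qed

lemma common_nbr_family_avoids_ends:
  assumes "loopless Arc"
  shows "v i \<notin> common_nbr_family Arc v i j \<and> v j \<notin> common_nbr_family Arc v i j"
  using assms unfolding loopless_def common_nbr_family_def in_nbr_def out_nbr_def by blast

definition ecp_digraph :: "nat \<Rightarrow> (nat \<Rightarrow> 'a) \<Rightarrow> (nat \<Rightarrow> nat \<Rightarrow> 'a set) \<Rightarrow> ('a \<times> 'a) set" where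
  "ecp_digraph n v S = {(x, v i) | x i. i \<in> {1..n} \<and> x \<in> A_set n v S i}"

lemma mem_A_set_iff_mem_B_set:
  assumes inj: "inj_on v {1..n}" and "i \<in> {1..n}" and "k \<in> {1..n}"
  shows "v k \<in> A_set n v S i \<longleftrightarrow> v i \<in> B_set n v S k"
proof -
  have "v k \<in> T_plus n v S i \<longleftrightarrow> v i \<in> S_col n S k"
    using assms unfolding T_plus_def S_col_def inj_on_def by blast
  moreover have "v k \<in> S_row n S i \<longleftrightarrow> v i \<in> T_minus n v S k"
    using assms unfolding S_row_def T_minus_def inj_on_def by blast
  ultimately show ?thesis unfolding A_set_def B_set_def by blast
qed

lemma A_set_subset_image:
  assumes "\<And>i j. i \<in> {1..n} \<Longrightarrow> j \<in> {1..n} \<Longrightarrow> S i j \<subseteq> v ` {1..n}"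
    and "i \<in> {1..n}"
  shows "A_set n v S i \<subseteq> v ` {1..n}"
  using assms unfolding A_set_def S_row_def T_plus_def by blast

lemma B_set_subset_image:
  assumes "\<And>i j. i \<in> {1..n} \<Longrightarrow> j \<in> {1..n} \<Longrightarrow> S i j \<subseteq> v ` {1..n}"
    and "j \<in> {1..n}"
  shows "B_set n v S j \<subseteq> v ` {1..n}"
  using assms unfolding B_set_def S_col_def T_minus_def by blast

lemma in_nbr_ecp_digraph:
  assumes "inj_on v {1..n}" and "i \<in> {1..n}"
  shows "in_nbr (ecp_digraph n v S) (v i) = A_set n v S i"
  using assms unfolding in_nbr_def ecp_digraph_def inj_on_def by blast

lemma out_nbr_ecp_digraph:
  assumes inj: "inj_on v {1..n}" and j: "j \<in> {1..n}"
    and S_V: "\<And>i j. i \<in> {1..n} \<Longrightarrow> j \<in> {1..n} \<Longrightarrow> S i j \<subseteq> v ` {1..n}"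
  shows "out_nbr (ecp_digraph n v S) (v j) = B_set n v S j"
proof -
  have "out_nbr (ecp_digraph n v S) (v j) = v ` {i\<in>{1..n}. v j \<in> A_set n v S i}"
    unfolding out_nbr_def ecp_digraph_def by blast
  also have "\<dots> = v ` {i\<in>{1..n}. v i \<in> B_set n v S j}"
    using mem_A_set_iff_mem_B_set[OF inj _ j] by blast
  also have "\<dots> = B_set n v S j"
    using B_set_subset_image[where S = S, OF S_V j] by blast
  finally show ?thesis .
qed

lemma ecp_digraph_subset:
  assumes "\<And>i j. i \<in> {1..n} \<Longrightarrow> j \<in> {1..n} \<Longrightarrow> S i j \<subseteq> v ` {1..n}"
  shows "ecp_digraph n v S \<subseteq> v ` {1..n} \<times> v ` {1..n}"
  using A_set_subset_image[where S = S, OF assms] unfolding ecp_digraph_def by fast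

lemma loopless_ecp_digraph:
  assumes inj: "inj_on v {1..n}"
    and avoid: "\<And>i j. i \<in> {1..n} \<Longrightarrow> j \<in> {1..n} \<Longrightarrow> v i \<notin> S i j \<and> v j \<notin> S i j"
  shows "loopless (ecp_digraph n v S)"
proof -
  have "v i \<notin> A_set n v S i" if i: "i \<in> {1..n}" for i
  proof -
    have "v i \<notin> S_row n S i" using avoid i unfolding S_row_def by blast
    moreover have "v i \<notin> T_plus n v S i"
      using avoid inj i unfolding T_plus_def inj_on_def by blast
    ultimately show ?thesis unfolding A_set_def by blast
  qed
  then show ?thesis unfolding loopless_def ecp_digraph_def by blast
qed

lemma double_competition_ecp_digraph:
  assumes bij: "bij_betw v {1..n} V" and ecp: "is_double_indexed_ecp V m n S"
    and cond_I: "\<forall>i\<in>{1..n}. \<forall>j\<in>{1..n}.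
      card (A_set n v S i \<inter> B_set n v S j) \<ge> 2 \<longrightarrow> A_set n v S i \<inter> B_set n v S j = S i j"
  shows "is_double_competition_multigraph V (ecp_digraph n v S) m"
  unfolding is_double_competition_multigraph_def
proof (intro ballI impI)
  fix x y assume xy: "x \<in> V" "y \<in> V" "x \<noteq> y"
  let ?D = "ecp_digraph n v S"
  have inj: "inj_on v {1..n}" and img: "v ` {1..n} = V"
    using bij by (auto simp: bij_betw_def)
  have S_V: "S i j \<subseteq> v ` {1..n}" if "i \<in> {1..n}" "j \<in> {1..n}" for i j
    using double_indexed_ecp_subset[OF ecp that] img by simp
  have mem_S: "x \<in> S i j \<and> y \<in> S i j \<longleftrightarrow> (x, v i) \<in> ?D \<and> (y, v i) \<in> ?D \<and> (v j, x) \<in> ?D \<and> (v j, y) \<in> ?D"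
    if ij: "i \<in> {1..n}" "j \<in> {1..n}" for i j
  proof -
    let ?AB = "A_set n v S i \<inter> B_set n v S j"
    have "?AB = S i j" if xy_AB: "{x, y} \<subseteq> ?AB"
    proof -
      have "finite ?AB"
        using A_set_subset_image[where S = S, OF S_V ij(1)] by (auto intro: finite_subset)
      then have "card {x, y} \<le> card ?AB" using xy_AB by (rule card_mono)
      then have "2 \<le> card ?AB" using xy(3) by simp
      then show ?thesis using cond_I ij by blast
    qed
    then have "x \<in> S i j \<and> y \<in> S i j \<longleftrightarrow> x \<in> ?AB \<and> y \<in> ?AB"
      using S_subset_A_set_Int_B_set[OF ij, of S v] by blast
    moreover have "(z, v i) \<in> ?D \<longleftrightarrow> z \<in> A_set n v S i" for z
      using in_nbr_ecp_digraph[OF inj ij(1), of S] unfolding in_nbr_def by blast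
    moreover have "(v j, z) \<in> ?D \<longleftrightarrow> z \<in> B_set n v S j" for z
      using out_nbr_ecp_digraph[where S = S, OF inj ij(2) S_V] unfolding out_nbr_def by blast
    ultimately show ?thesis by blast
  qed
  have D_V: "?D \<subseteq> V \<times> V" using ecp_digraph_subset[where S = S, OF S_V] img by simp
  have "card {(i, j). i \<in> {1..n} \<and> j \<in> {1..n} \<and> x \<in> S i j \<and> y \<in> S i j}
      = card (out_nbr ?D x \<inter> out_nbr ?D y) * card (in_nbr ?D x \<inter> in_nbr ?D y)"
    by (rule card_pairs_eq_double_competition[OF bij D_V mem_S])
  then show "m {x, y} = card (out_nbr ?D x \<inter> out_nbr ?D y) * card (in_nbr ?D x \<inter> in_nbr ?D y)"
    using ecp xy unfolding is_double_indexed_ecp_def by simp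
qed

theorem theorem2:
  fixes V :: "'a set" and m :: "'a set \<Rightarrow> nat" and n :: nat
  assumes "finite V" and "card V = n"
  shows "(\<exists>Arc. Arc \<subseteq> V \<times> V \<and> loopless Arc \<and> is_double_competition_multigraph V Arc m)
     \<longleftrightarrow>
     (\<exists>(v :: nat \<Rightarrow> 'a) (S :: nat \<Rightarrow> nat \<Rightarrow> 'a set).
        bij_betw v {1..n} V \<and> is_double_indexed_ecp V m n S \<and>
        (\<forall>i\<in>{1..n}. \<forall>j\<in>{1..n}.
           card (A_set n v S i \<inter> B_set n v S j) \<ge> 2 \<longrightarrow>
           A_set n v S i \<inter> B_set n v S j = S i j) \<and>
        (\<forall>i\<in>{1..n}. \<forall>j\<in>{1..n}. v i \<notin> S i j \<and> v j \<notin> S i j))"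
  (is "?digraph \<longleftrightarrow> ?partition")
proof
  assume ?digraph
  then obtain Arc where Arc: "Arc \<subseteq> V \<times> V" "loopless Arc" "is_double_competition_multigraph V Arc m"
    by blast
  obtain v where bij: "bij_betw v {1..n} V"
    using ex_bij_betw_nat_finite_1[OF assms(1)] assms(2) by blast
  show ?partition
    using bij double_indexed_ecp_common_nbr_family[OF bij Arc(1,3)]
      A_set_Int_B_set_common_nbr_family common_nbr_family_avoids_ends[OF Arc(2)]
    by (intro exI[of _ v] exI[of _ "common_nbr_family Arc v"] conjI ballI impI) simp_all
next
  assume ?partition
  then obtain v S where bij: "bij_betw v {1..n} V" and ecp: "is_double_indexed_ecp V m n S"
    and cond_I: "\<forall>i\<in>{1..n}. \<forall>j\<in>{1..n}.
      card (A_set n v S i \<inter> B_set n v S j) \<ge> 2 \<longrightarrow> A_set n v S i \<inter> B_set n v S j = S i j"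
    and cond_II: "\<forall>i\<in>{1..n}. \<forall>j\<in>{1..n}. v i \<notin> S i j \<and> v j \<notin> S i j"
    by blast
  have inj: "inj_on v {1..n}" and img: "v ` {1..n} = V"
    using bij by (auto simp: bij_betw_def)
  have S_V: "S i j \<subseteq> v ` {1..n}" if "i \<in> {1..n}" "j \<in> {1..n}" for i j
    using double_indexed_ecp_subset[OF ecp that] img by simp
  show ?digraph
  proof (intro exI[of _ "ecp_digraph n v S"] conjI)
    show "ecp_digraph n v S \<subseteq> V \<times> V"
      using ecp_digraph_subset[where S = S, OF S_V] img by simp
    show "loopless (ecp_digraph n v S)"
      using loopless_ecp_digraph[OF inj] cond_II by blast
  qed (rule double_competition_ecp_digraph[OF bij ecp cond_I])
qed

end
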